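(* For the $3\times3$ absorbing game \[ A=\begin{bmatrix}1^* & 1^* & 2^*\\ 1^* & 2^* & 0\\ 2^* & 0 & 1^*\end{bmatrix}, \] let \[ \alpha=-1+\frac13\sqrt[3]{\frac{27}{2}-\frac{3\sqrt{69}}{2}}+\frac{\sqrt[3]{\tfrac12(9+\sqrt{69})}}{\sqrt[3]{9}}\approx0.3247, \] and let $x=(x^1,x^2,x^3)=(\alpha,\,1-2\alpha-\alpha^2,\,\alpha+\alpha^2)\in\Delta(\{1,2,3\})$. Then $x$ is the unique $x\in\Delta(\{1,2,3\})$ satisfying \[ x^1+x^2+2x^3=\frac{x^1+2x^2}{x^1+x^2}=\frac{2x^1+x^3}{x^1+x^3}, \] and for every column $j\in\{1,2,3\}$, $\lim_{\lambda\to0}\gamma_\lambda(x,j)=1+\alpha+\alpha^2$, where $\gamma_\lambda(x,j)$ is the $\lambda$-discounted payoff when Player 1 plays the stationary strategy $x$ and Player 2 plays the pure stationary action $j$. Consequently the limit value is $v=1+\alpha+\alpha^2$. *)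

theory Defs
  imports "HOL-Analysis.Analysis"
begin

definition mixed_actions :: "nat set \<Rightarrow> (nat \<Rightarrow> real) set" where
  "mixed_actions I = {x. (\<forall>i\<in>I. 0 \<le> x i) \<and> (\<forall>i. i \<notin> I \<longrightarrow> x i = 0) \<and> (\<Sum>i\<in>I. x i) = 1}"

definition pure :: "nat \<Rightarrow> nat \<Rightarrow> real" where
  "pure j = (\<lambda>k. if k = j then 1 else 0)"

text \<open>An absorbing game with action sets I (Player 1) and J (Player 2), payoff g and
absorbing-entry predicate ab (entries marked with a star).\<close>
definition abs_prob :: "nat set \<Rightarrow> nat set \<Rightarrow> (nat \<Rightarrow> nat \<Rightarrow> bool) \<Rightarrow>
    (nat \<Rightarrow> real) \<Rightarrow> (nat \<Rightarrow> real) \<Rightarrow> real" where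
  "abs_prob I J ab x y = (\<Sum>i\<in>I. \<Sum>j\<in>J. if ab i j then x i * y j else 0)"

text \<open>Expected payoff at stage n+1 (n = 0,1,...) under stationary x, y:
 with probability (1-p)^n play has not been absorbed and the current stage payoff is the
 expected one-shot payoff; with probability (1-p)^s x_i y_j it was absorbed at stage s+1 <= n
 in absorbing entry (i,j), giving payoff g i j forever.\<close>
definition stage_payoff :: "nat set \<Rightarrow> nat set \<Rightarrow> (nat \<Rightarrow> nat \<Rightarrow> real) \<Rightarrow> (nat \<Rightarrow> nat \<Rightarrow> bool) \<Rightarrow>
    (nat \<Rightarrow> real) \<Rightarrow> (nat \<Rightarrow> real) \<Rightarrow> nat \<Rightarrow> real" where
  "stage_payoff I J g ab x y n =
     (let p = abs_prob I J ab x y in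
      (1 - p) ^ n * (\<Sum>i\<in>I. \<Sum>j\<in>J. x i * y j * g i j)
      + (\<Sum>s<n. (1 - p) ^ s * (\<Sum>i\<in>I. \<Sum>j\<in>J. if ab i j then x i * y j * g i j else 0)))"

definition disc_payoff :: "nat set \<Rightarrow> nat set \<Rightarrow> (nat \<Rightarrow> nat \<Rightarrow> real) \<Rightarrow> (nat \<Rightarrow> nat \<Rightarrow> bool) \<Rightarrow>
    real \<Rightarrow> (nat \<Rightarrow> real) \<Rightarrow> (nat \<Rightarrow> real) \<Rightarrow> real" where
  "disc_payoff I J g ab l x y = (\<Sum>n. l * (1 - l) ^ n * stage_payoff I J g ab x y n)"

text \<open>By Shapley's theorem both players have stationary optimal
strategies, and against a stationary strategy a best reply may be taken stationary, so the
value equals sup over stationary x of inf over stationary y of the discounted payoff.\<close>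
definition disc_value :: "nat set \<Rightarrow> nat set \<Rightarrow> (nat \<Rightarrow> nat \<Rightarrow> real) \<Rightarrow> (nat \<Rightarrow> nat \<Rightarrow> bool) \<Rightarrow>
    real \<Rightarrow> real" where
  "disc_value I J g ab l =
     (SUP x\<in>mixed_actions I. INF y\<in>mixed_actions J. disc_payoff I J g ab l x y)"

text \<open>The concrete 3x3 game: [[1*,1*,2*],[1*,2*,0],[2*,0,1*]].\<close>
definition gA :: "nat \<Rightarrow> nat \<Rightarrow> real" where
  "gA i j = (if (i, j) \<in> {(1,3), (2,2), (3,1)} then 2
             else if (i, j) \<in> {(2,3), (3,2)} then 0 else 1)"

definition abA :: "nat \<Rightarrow> nat \<Rightarrow> bool" where
  "abA i j = ((i, j) \<notin> {(2,3), (3,2)})"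

definition alphaA :: real where
  "alphaA = -1 + root 3 (27/2 - 3 * sqrt 69 / 2) / 3 + root 3 ((9 + sqrt 69) / 2) / root 3 9"

end

theory Submission
  imports Defs
begin

(* Against stationary strategies an absorbing game is a Markov chain that is absorbed with
   probability p per stage, so the stage payoffs satisfy f(n+1) = (1-p) f(n) + q and the
   discounted payoff is (l r + (1-l) q) / (l + (1-l) p), where r is the expected one-shot payoff
   and q the absorbing part of it.  In this game r = q, and as l -> 0 the payoff of a column
   tends to the ratio q/p.

   Put s = alpha + alpha^2, the real root of s^3 - 2 s^2 + 3 s - 1 = 0 (so 0 < s < 1); then
   x = ((1-s)^2, s(1-s), s), and under x every column has ratio 1 + s and absorbs with
   probability at least (1-s)^2, so x guarantees 1 + s in the limit.  Conversely, if some x had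
   ratio above 1 + s in all three columns, then x3 > s, (1-s) x2 > s x1 and (1-s) x1 > s x3;
   chaining these gives (1-s)^2 (x1 + x2 + x3) > (1-s+s^2) s = (1-s)^2, which contradicts
   x1 + x2 + x3 = 1.  So for every l the discounted value lies between 1 + s and a quantity
   tending to 1 + s. *)

definition expected_payoff ::
    "nat set \<Rightarrow> nat set \<Rightarrow> (nat \<Rightarrow> nat \<Rightarrow> real) \<Rightarrow> (nat \<Rightarrow> real) \<Rightarrow> (nat \<Rightarrow> real) \<Rightarrow> real" where
  "expected_payoff I J g x y = (\<Sum>i\<in>I. \<Sum>j\<in>J. x i * y j * g i j)"

definition absorbing_payoff :: "nat set \<Rightarrow> nat set \<Rightarrow> (nat \<Rightarrow> nat \<Rightarrow> real) \<Rightarrow>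
    (nat \<Rightarrow> nat \<Rightarrow> bool) \<Rightarrow> (nat \<Rightarrow> real) \<Rightarrow> (nat \<Rightarrow> real) \<Rightarrow> real" where
  "absorbing_payoff I J g ab x y = (\<Sum>i\<in>I. \<Sum>j\<in>J. if ab i j then x i * y j * g i j else 0)"

lemma stage_payoff_0: "stage_payoff I J g ab x y 0 = expected_payoff I J g x y"
  by (simp add: stage_payoff_def expected_payoff_def)

lemma stage_payoff_Suc:
  "stage_payoff I J g ab x y (Suc n) =
     (1 - abs_prob I J ab x y) * stage_payoff I J g ab x y n + absorbing_payoff I J g ab x y"
  unfolding stage_payoff_def Let_def expected_payoff_def[symmetric] absorbing_payoff_def[symmetric]
  by (simp only: sum.lessThan_Suc_shift sum_distrib_left) (simp add: algebra_simps sum_distrib_left)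

lemma pure_mixed_actions: "finite I \<Longrightarrow> j \<in> I \<Longrightarrow> pure j \<in> mixed_actions I"
  by (simp add: mixed_actions_def pure_def)

lemma mixed_actions_product_sum:
  assumes "finite I" "finite J" "x \<in> mixed_actions I" "y \<in> mixed_actions J"
  shows "(\<Sum>i\<in>I. \<Sum>j\<in>J. x i * y j) = 1"
  using assms by (simp add: mixed_actions_def sum_product[symmetric])

lemma mixed_actions_product_nonneg:
  "x \<in> mixed_actions I \<Longrightarrow> y \<in> mixed_actions J \<Longrightarrow> i \<in> I \<Longrightarrow> j \<in> J \<Longrightarrow> 0 \<le> x i * y j"
  by (simp add: mixed_actions_def)

lemma abs_prob_bounds:
  assumes "finite I" "finite J" "x \<in> mixed_actions I" "y \<in> mixed_actions J"
  shows "0 \<le> abs_prob I J ab x y" "abs_prob I J ab x y \<le> 1"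
proof -
  have "abs_prob I J ab x y \<le> (\<Sum>i\<in>I. \<Sum>j\<in>J. x i * y j)"
    unfolding abs_prob_def using mixed_actions_product_nonneg[OF assms(3,4)]
    by (intro sum_mono) auto
  then show "abs_prob I J ab x y \<le> 1"
    using mixed_actions_product_sum[OF assms] by simp
  show "0 \<le> abs_prob I J ab x y"
    unfolding abs_prob_def using mixed_actions_product_nonneg[OF assms(3,4)]
    by (intro sum_nonneg) auto
qed

lemma abs_double_sum_weighted_le:
  fixes w g :: "nat \<Rightarrow> nat \<Rightarrow> real"
  assumes fin: "finite I" "finite J" and w: "\<And>i j. i \<in> I \<Longrightarrow> j \<in> J \<Longrightarrow> 0 \<le> w i j"
  shows "\<bar>\<Sum>i\<in>I. \<Sum>j\<in>J. w i j * g i j\<bar> \<le> (\<Sum>i\<in>I. \<Sum>j\<in>J. \<bar>g i j\<bar>) * (\<Sum>i\<in>I. \<Sum>j\<in>J. w i j)"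
proof -
  define K where "K = (\<Sum>i\<in>I. \<Sum>j\<in>J. \<bar>g i j\<bar>)"
  have gK: "\<bar>g i j\<bar> \<le> K" if "i \<in> I" "j \<in> J" for i j
  proof -
    have "\<bar>g i j\<bar> \<le> (\<Sum>j'\<in>J. \<bar>g i j'\<bar>)"
      using fin that by (intro member_le_sum) auto
    also have "\<dots> \<le> K"
      unfolding K_def using fin that by (intro member_le_sum sum_nonneg) auto
    finally show ?thesis .
  qed
  have "\<bar>\<Sum>i\<in>I. \<Sum>j\<in>J. w i j * g i j\<bar> \<le> (\<Sum>i\<in>I. \<Sum>j\<in>J. \<bar>w i j * g i j\<bar>)"
    by (rule order_trans[OF sum_abs sum_mono]) (rule sum_abs)
  also have "\<dots> \<le> (\<Sum>i\<in>I. \<Sum>j\<in>J. K * w i j)"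
    using w gK by (intro sum_mono) (metis abs_mult abs_of_nonneg mult.commute mult_right_mono)
  finally show ?thesis
    by (simp add: K_def sum_distrib_left)
qed

lemma stage_payoff_bounded:
  assumes fin: "finite I" "finite J" and x: "x \<in> mixed_actions I" and y: "y \<in> mixed_actions J"
  shows "\<bar>stage_payoff I J g ab x y n\<bar> \<le> (\<Sum>i\<in>I. \<Sum>j\<in>J. \<bar>g i j\<bar>)"
proof -
  define K where "K = (\<Sum>i\<in>I. \<Sum>j\<in>J. \<bar>g i j\<bar>)"
  define p where "p = abs_prob I J ab x y"
  have p: "0 \<le> p" "p \<le> 1"
    unfolding p_def using abs_prob_bounds[OF fin x y] by auto
  have "\<bar>expected_payoff I J g x y\<bar> \<le> K * (\<Sum>i\<in>I. \<Sum>j\<in>J. x i * y j)"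
    unfolding expected_payoff_def K_def
    using abs_double_sum_weighted_le[OF fin mixed_actions_product_nonneg[OF x y]] by simp
  then have r: "\<bar>expected_payoff I J g x y\<bar> \<le> K"
    by (simp add: mixed_actions_product_sum[OF fin x y])
  have "absorbing_payoff I J g ab x y =
          (\<Sum>i\<in>I. \<Sum>j\<in>J. (if ab i j then x i * y j else 0) * g i j)"
    by (auto simp: absorbing_payoff_def intro!: sum.cong)
  then have q: "\<bar>absorbing_payoff I J g ab x y\<bar> \<le> K * p"
    unfolding K_def p_def abs_prob_def
    using abs_double_sum_weighted_le[OF fin, of "\<lambda>i j. if ab i j then x i * y j else 0"]
      mixed_actions_product_nonneg[OF x y] by simp
  show ?thesis
  proof (induction n)
    case 0
    then show ?case
      using r by (simp add: stage_payoff_0 K_def)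
  next
    case (Suc n)
    have "\<bar>stage_payoff I J g ab x y (Suc n)\<bar>
            \<le> (1 - p) * \<bar>stage_payoff I J g ab x y n\<bar> + \<bar>absorbing_payoff I J g ab x y\<bar>"
      unfolding stage_payoff_Suc p_def[symmetric] using p
      by (metis abs_mult abs_of_nonneg abs_triangle_ineq diff_ge_0_iff_ge)
    also have "\<dots> \<le> (1 - p) * K + K * p"
      using Suc p q unfolding K_def by (intro add_mono mult_left_mono) auto
    finally show ?case
      by (simp add: K_def algebra_simps)
  qed
qed

lemma discounted_sum_affine_recurrence:
  fixes f :: "nat \<Rightarrow> real"
  assumes rec: "\<And>n. f (Suc n) = c * f n + q" and bounded: "\<And>n. \<bar>f n\<bar> \<le> B"
    and l: "0 < l" "l < 1" and c: "0 \<le> c" "c \<le> 1"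
  shows "(\<Sum>n. l * (1 - l) ^ n * f n) = (l * f 0 + (1 - l) * q) / (1 - (1 - l) * c)"
proof -
  define a where "a = (\<lambda>n. l * (1 - l) ^ n * f n)"
  have summable: "summable a"
  proof (rule summable_comparison_test')
    show "summable (\<lambda>n. (l * B) * (1 - l) ^ n)"
      using l by (intro summable_mult summable_geometric) auto
    show "norm (a n) \<le> (l * B) * (1 - l) ^ n" for n
      using bounded[of n] l by (simp add: a_def abs_mult mult_left_mono mult.commute mult.left_commute)
  qed
  define S where "S = suminf a"
  have "(\<lambda>n. (1 - l) * c * a n + (1 - l) * q * l * (1 - l) ^ n)
          sums ((1 - l) * c * S + (1 - l) * q * l * (1 / l))"
    using geometric_sums[of "1 - l"] l summable
    by (intro sums_add sums_mult) (auto simp: S_def summable_sums)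
  moreover have "(\<lambda>n. a (Suc n)) = (\<lambda>n. (1 - l) * c * a n + (1 - l) * q * l * (1 - l) ^ n)"
    by (auto simp: a_def rec algebra_simps)
  ultimately have "(\<lambda>n. a (Suc n)) sums ((1 - l) * c * S + (1 - l) * q)"
    using l by simp
  then have "(\<Sum>n. a (Suc n)) = (1 - l) * c * S + (1 - l) * q"
    by (rule sums_unique[symmetric])
  moreover have "(\<Sum>n. a (Suc n)) = S - l * f 0"
    using suminf_split_head[OF summable] by (simp add: S_def a_def)
  ultimately have "S - l * f 0 = (1 - l) * c * S + (1 - l) * q"
    by simp
  then have "S * (1 - (1 - l) * c) = l * f 0 + (1 - l) * q"
    by (simp add: algebra_simps)
  moreover have "(1 - l) * c < 1"
    using l c mult_left_le[of c "1 - l"] by linarith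
  ultimately have "S = (l * f 0 + (1 - l) * q) / (1 - (1 - l) * c)"
    by (simp add: field_simps)
  then show ?thesis
    unfolding S_def a_def .
qed

lemma disc_payoff_stationary:
  assumes fin: "finite I" "finite J" and x: "x \<in> mixed_actions I" and y: "y \<in> mixed_actions J"
    and l: "0 < l" "l < 1"
  shows "disc_payoff I J g ab l x y =
    (l * expected_payoff I J g x y + (1 - l) * absorbing_payoff I J g ab x y)
      / (l + (1 - l) * abs_prob I J ab x y)"
proof -
  have "disc_payoff I J g ab l x y =
    (l * expected_payoff I J g x y + (1 - l) * absorbing_payoff I J g ab x y)
      / (1 - (1 - l) * (1 - abs_prob I J ab x y))"
    unfolding disc_payoff_def stage_payoff_0[of I J g ab, symmetric]
    using abs_prob_bounds[OF fin x y] stage_payoff_bounded[OF fin x y] l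
    by (intro discounted_sum_affine_recurrence stage_payoff_Suc) auto
  then show ?thesis by (simp add: algebra_simps)
qed

lemma discounted_ratio_mono:
  fixes l a b :: real
  assumes "0 \<le> l" "l \<le> 1" "0 < a" "a \<le> b"
  shows "a / (l + (1 - l) * a) \<le> b / (l + (1 - l) * b)"
proof -
  have "0 < l + (1 - l) * c" if "0 < c" for c
    using assms that by (cases "l = 0") (simp_all add: add_pos_nonneg)
  then have "0 < l + (1 - l) * a" "0 < l + (1 - l) * b"
    using assms by simp_all
  moreover have "a * (l + (1 - l) * b) \<le> b * (l + (1 - l) * a)"
    using assms by (simp add: algebra_simps mult_right_mono)
  ultimately show ?thesis
    by (simp add: divide_simps)
qed

lemma tendsto_discounted_ratio:
  fixes R P :: real
  assumes "0 < P"
  shows "((\<lambda>l. R / (l + (1 - l) * P)) \<longlongrightarrow> R / P) (at_right 0)"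
proof -
  have "((\<lambda>l. R / (l + (1 - l) * P)) \<longlongrightarrow> R / (0 + (1 - 0) * P)) (at_right 0)"
    using assms by (intro tendsto_intros) auto
  then show ?thesis
    by simp
qed

lemma eventually_unit_interval_at_right_0: "eventually (\<lambda>l. 0 < l \<and> l < (1::real)) (at_right 0)"
  by (rule eventually_at_rightI[of 0 1]) auto

lemma sup_inf_bounds:
  fixes f :: "'a \<Rightarrow> 'b \<Rightarrow> real"
  assumes "x0 \<in> X" "Y \<noteq> {}"
    and lower: "\<And>y. y \<in> Y \<Longrightarrow> lo \<le> f x0 y"
    and upper: "\<And>x. x \<in> X \<Longrightarrow> \<exists>y\<in>Y. f x y \<le> hi"
    and bounded: "\<And>x y. x \<in> X \<Longrightarrow> y \<in> Y \<Longrightarrow> b \<le> f x y"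
  shows "lo \<le> (SUP x\<in>X. INF y\<in>Y. f x y)" "(SUP x\<in>X. INF y\<in>Y. f x y) \<le> hi"
proof -
  have inf_le: "(INF y\<in>Y. f x y) \<le> hi" if x: "x \<in> X" for x
  proof -
    obtain y where "y \<in> Y" "f x y \<le> hi"
      using upper[OF x] by blast
    moreover have "bdd_below (f x ` Y)"
      by (rule bdd_belowI2[where m = b]) (rule bounded[OF x])
    ultimately show ?thesis
      by (blast intro: cINF_lower2)
  qed
  then show "(SUP x\<in>X. INF y\<in>Y. f x y) \<le> hi"
    using assms(1) by (intro cSUP_least) auto
  have "lo \<le> (INF y\<in>Y. f x0 y)"
    using assms(2) lower by (rule cINF_greatest)
  also have "\<dots> \<le> (SUP x\<in>X. INF y\<in>Y. f x y)"
    using assms(1) inf_le by (intro cSUP_upper bdd_aboveI2) auto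
  finally show "lo \<le> (SUP x\<in>X. INF y\<in>Y. f x y)" .
qed

(* Cardano: alphaA + 1 = a + b with a^3 + b^3 = 1 and a b = 1/3, so t = a + b solves
   t^3 = 3 a b t + a^3 + b^3 = t + 1. *)
lemma alphaA_cubic: "alphaA ^ 3 + 3 * alphaA ^ 2 + 2 * alphaA - 1 = 0"
proof -
  define s where "s = sqrt (69::real)"
  define a where "a = root 3 ((27 - 3 * s) / 2) / 3"
  define b where "b = root 3 ((9 + s) / 2) / root 3 9"
  have "alphaA = a + b - 1"
    by (simp add: alphaA_def a_def b_def s_def)
  moreover have "a ^ 3 + b ^ 3 = 1"
    by (simp add: a_def b_def odd_real_root_pow field_simps)
  moreover have "a * b = 1 / 3"
  proof -
    have "(27 - 3 * s) / 2 * ((9 + s) / 2) = 9"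
      by (simp add: s_def algebra_simps)
    then have "root 3 ((27 - 3 * s) / 2) * root 3 ((9 + s) / 2) = root 3 9"
      by (simp add: real_root_mult[symmetric])
    then show ?thesis
      by (simp add: a_def b_def field_simps)
  qed
  ultimately show ?thesis
    by algebra
qed

lemma cubic_root_bounds:
  fixes s :: real
  assumes "s ^ 3 - 2 * s ^ 2 + 3 * s - 1 = 0"
  shows "0 < s" "s < 1"
proof -
  have "s * ((s - 1) ^ 2 + 2) = 1"
    using assms by algebra
  then have "0 < s * ((s - 1) ^ 2 + 2)"
    by simp
  moreover have "0 < (s - 1) ^ 2 + 2"
    by (simp add: add_nonneg_pos)
  ultimately show "0 < s"
    by (simp add: zero_less_mult_iff)
  have "(s - 1) * (s ^ 2 - s + 2) = -1"
    using assms by algebra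
  then have "(s - 1) * (s ^ 2 - s + 2) < 0"
    by simp
  moreover have "0 < s ^ 2 - s + 2"
    using zero_le_power2[of "s - 1/2"] by (simp add: power2_eq_square algebra_simps)
  ultimately show "s < 1"
    by (simp add: mult_less_0_iff)
qed

lemma cubic_root_unique:
  fixes s t :: real
  assumes "s ^ 3 - 2 * s ^ 2 + 3 * s - 1 = 0" "t ^ 3 - 2 * t ^ 2 + 3 * t - 1 = 0"
  shows "s = t"
proof -
  have "(s - t) * (s ^ 2 + s * t + t ^ 2 - 2 * s - 2 * t + 3) = 0"
    using assms by algebra
  moreover have "s ^ 2 + s * t + t ^ 2 - 2 * s - 2 * t + 3 = 3/4 * (s + t - 4/3) ^ 2 + 1/4 * (s - t) ^ 2 + 5/3"
    by (simp add: power2_eq_square algebra_simps)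
  moreover have "0 < 3/4 * (s + t - 4/3) ^ 2 + 1/4 * (s - t) ^ 2 + (5/3 :: real)"
    by (intro add_nonneg_pos) auto
  ultimately show ?thesis
    by simp
qed

definition sigmaA :: real where
  "sigmaA = alphaA + alphaA ^ 2"

lemma sigmaA_cubic: "sigmaA ^ 3 - 2 * sigmaA ^ 2 + 3 * sigmaA - 1 = 0"
  using alphaA_cubic unfolding sigmaA_def by algebra

lemma sigmaA_bounds: "0 < sigmaA" "sigmaA < 1"
  using cubic_root_bounds[OF sigmaA_cubic] by auto

lemma alphaA_sigmaA:
  "alphaA = (1 - sigmaA) ^ 2" "1 - 2 * alphaA - alphaA ^ 2 = sigmaA * (1 - sigmaA)"
  using alphaA_cubic unfolding sigmaA_def by algebra+

(* The two non-absorbing entries of A pay 0, so the expected and the absorbing payoff of a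
   stage coincide: both are payoffA. *)
definition absorbA :: "(nat \<Rightarrow> real) \<Rightarrow> (nat \<Rightarrow> real) \<Rightarrow> real" where
  "absorbA x y = y 1 * (x 1 + x 2 + x 3) + y 2 * (x 1 + x 2) + y 3 * (x 1 + x 3)"

definition payoffA :: "(nat \<Rightarrow> real) \<Rightarrow> (nat \<Rightarrow> real) \<Rightarrow> real" where
  "payoffA x y = y 1 * (x 1 + x 2 + 2 * x 3) + y 2 * (x 1 + 2 * x 2) + y 3 * (2 * x 1 + x 3)"

lemma abs_prob_A: "abs_prob {1,2,3} {1,2,3} abA x y = absorbA x y"
  by (simp add: abs_prob_def abA_def absorbA_def algebra_simps)

lemma expected_payoff_A: "expected_payoff {1,2,3} {1,2,3} gA x y = payoffA x y"
  by (simp add: expected_payoff_def gA_def payoffA_def algebra_simps)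

lemma absorbing_payoff_A: "absorbing_payoff {1,2,3} {1,2,3} gA abA x y = payoffA x y"
  by (simp add: absorbing_payoff_def gA_def abA_def payoffA_def algebra_simps)

lemma absorbA_pure:
  "absorbA x (pure 1) = x 1 + x 2 + x 3" "absorbA x (pure 2) = x 1 + x 2"
  "absorbA x (pure 3) = x 1 + x 3"
  by (simp_all add: absorbA_def pure_def)

lemma payoffA_pure:
  "payoffA x (pure 1) = x 1 + x 2 + 2 * x 3" "payoffA x (pure 2) = x 1 + 2 * x 2"
  "payoffA x (pure 3) = 2 * x 1 + x 3"
  by (simp_all add: payoffA_def pure_def)

lemma mixed_actions_123:
  "x \<in> mixed_actions {1,2,3} \<longleftrightarrow>
     0 \<le> x 1 \<and> 0 \<le> x 2 \<and> 0 \<le> x 3 \<and> x 1 + x 2 + x 3 = 1 \<and> (\<forall>i. i \<notin> {1,2,3} \<longrightarrow> x i = 0)"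
  by (auto simp: mixed_actions_def add.assoc)

lemma absorbA_bounds:
  assumes "x \<in> mixed_actions {1,2,3}" "y \<in> mixed_actions {1,2,3}"
  shows "0 \<le> absorbA x y" "absorbA x y \<le> 1"
  using abs_prob_bounds[OF _ _ assms, of abA] unfolding abs_prob_A by simp_all

lemma payoffA_nonneg:
  "x \<in> mixed_actions {1,2,3} \<Longrightarrow> y \<in> mixed_actions {1,2,3} \<Longrightarrow> 0 \<le> payoffA x y"
  unfolding mixed_actions_123 payoffA_def by simp

lemma disc_payoff_A:
  assumes "x \<in> mixed_actions {1,2,3}" "y \<in> mixed_actions {1,2,3}" "0 < l" "l < 1"
  shows "disc_payoff {1,2,3} {1,2,3} gA abA l x y = payoffA x y / (l + (1 - l) * absorbA x y)"
proof -
  have fin: "finite {1, 2, 3 :: nat}"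
    by simp
  show ?thesis
    unfolding disc_payoff_stationary[OF fin fin assms]
      abs_prob_A expected_payoff_A absorbing_payoff_A
    by (simp add: algebra_simps)
qed

definition xA :: "nat \<Rightarrow> real" where
  "xA i = (if i = 1 then (1 - sigmaA) ^ 2 else if i = 2 then sigmaA * (1 - sigmaA)
           else if i = 3 then sigmaA else 0)"

lemma xA_mixed: "xA \<in> mixed_actions {1,2,3}"
  using sigmaA_bounds zero_le_power2[of "1 - sigmaA"]
  unfolding mixed_actions_123 by (simp add: xA_def algebra_simps power2_eq_square)

(* Column 1 absorbs in every row, so its ratio has denominator x1 + x2 + x3 = 1. *)
definition equal_column_ratiosA :: "(nat \<Rightarrow> real) \<Rightarrow> bool" where
  "equal_column_ratiosA y \<longleftrightarrow>
     y 1 + y 2 + 2 * y 3 = (y 1 + 2 * y 2) / (y 1 + y 2)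
     \<and> (y 1 + 2 * y 2) / (y 1 + y 2) = (2 * y 1 + y 3) / (y 1 + y 3)"

lemma absorbA_xA_ge:
  assumes "y \<in> mixed_actions {1,2,3}"
  shows "(1 - sigmaA) ^ 2 \<le> absorbA xA y"
proof -
  have y: "0 \<le> y 1" "0 \<le> y 2" "0 \<le> y 3" "y 1 + y 2 + y 3 = 1"
    using assms unfolding mixed_actions_123 by auto
  have xA: "xA 1 + xA 2 + xA 3 = 1" "xA 1 + xA 2 = 1 - sigmaA"
    "xA 1 + xA 3 = (1 - sigmaA) ^ 2 + sigmaA"
    by (simp_all add: xA_def power2_eq_square algebra_simps)
  have "(1 - sigmaA) ^ 2 \<le> 1 - sigmaA"
    using sigmaA_bounds by (simp add: power2_eq_square mult_left_le)
  then have "y 1 * (1 - sigmaA) ^ 2 + y 2 * (1 - sigmaA) ^ 2 + y 3 * (1 - sigmaA) ^ 2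
               \<le> y 1 * 1 + y 2 * (1 - sigmaA) + y 3 * ((1 - sigmaA) ^ 2 + sigmaA)"
    using y sigmaA_bounds
    by (intro add_mono mult_left_mono) auto
  then show ?thesis
    using y xA unfolding absorbA_def by (simp add: distrib_right[symmetric])
qed

lemma payoffA_xA: "payoffA xA y = (1 + sigmaA) * absorbA xA y"
  using sigmaA_cubic by (simp add: payoffA_def absorbA_def xA_def) algebra

lemma equal_column_ratiosA_xA: "equal_column_ratiosA xA"
proof -
  have pos: "0 < absorbA xA (pure j)" if "j \<in> {1,2,3}" for j
  proof -
    have "pure j \<in> mixed_actions {1,2,3}"
      using that by (simp add: pure_mixed_actions)
    moreover have "0 < (1 - sigmaA) ^ 2"
      using sigmaA_bounds by simp
    ultimately show ?thesis
      using absorbA_xA_ge by (blast intro: less_le_trans)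
  qed
  have "payoffA xA (pure j) / absorbA xA (pure j) = 1 + sigmaA" if "j \<in> {1,2,3}" for j
    using pos[OF that] by (simp add: payoffA_xA)
  from this[of 1] this[of 2] this[of 3] show ?thesis
    unfolding equal_column_ratiosA_def absorbA_pure payoffA_pure
    using xA_mixed unfolding mixed_actions_123 by simp
qed

lemma equal_column_ratiosA_unique:
  assumes y: "y \<in> mixed_actions {1,2,3}" and eq: "equal_column_ratiosA y"
  shows "y = xA"
proof -
  have ys: "0 \<le> y 1" "0 \<le> y 2" "0 \<le> y 3" "y 1 + y 2 + y 3 = 1"
    and y0: "\<forall>i. i \<notin> {1,2,3} \<longrightarrow> y i = 0"
    using y unfolding mixed_actions_123 by auto
  have r2: "y 1 + y 2 + 2 * y 3 = (y 1 + 2 * y 2) / (y 1 + y 2)"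
    and r3: "y 1 + y 2 + 2 * y 3 = (2 * y 1 + y 3) / (y 1 + y 3)"
    using eq unfolding equal_column_ratiosA_def by simp_all
  have "y 1 + y 2 \<noteq> 0" "y 1 + y 3 \<noteq> 0"
    using r2 r3 ys by (auto simp: add_nonneg_eq_0_iff)
  then have e1: "(y 1 + y 2 + 2 * y 3) * (y 1 + y 2) = y 1 + 2 * y 2"
    and e2: "(y 1 + y 2 + 2 * y 3) * (y 1 + y 3) = 2 * y 1 + y 3"
    using r2 r3 by (simp_all add: eq_divide_eq)
  have "y 3 ^ 3 - 2 * y 3 ^ 2 + 3 * y 3 - 1 = 0"
    using e1 e2 ys(4) by algebra
  then have y3: "y 3 = sigmaA"
    using cubic_root_unique sigmaA_cubic by blast
  have "y 2 = y 3 * (1 - y 3)"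
    using e1 ys(4) by algebra
  then have y2: "y 2 = sigmaA * (1 - sigmaA)"
    unfolding y3 .
  have "y i = xA i" for i
    using y0 ys(4) y2 y3 by (cases "i \<in> {1,2,3}") (auto simp: xA_def power2_eq_square algebra_simps)
  then show ?thesis ..
qed

lemma exists_column_ratio_le:
  assumes "x \<in> mixed_actions {1,2,3}"
  shows "\<exists>j\<in>{1,2,3}. payoffA x (pure j) \<le> (1 + sigmaA) * absorbA x (pure j)"
proof (rule ccontr)
  let ?s = sigmaA
  have x: "0 \<le> x 1" "0 \<le> x 2" "0 \<le> x 3" "x 1 + x 2 + x 3 = 1"
    using assms unfolding mixed_actions_123 by auto
  have s: "0 < ?s" "?s < 1"
    by (fact sigmaA_bounds)+
  assume "\<not> ?thesis"
  then have lt: "(1 + ?s) * absorbA x (pure j) < payoffA x (pure j)" if "j \<in> {1,2,3}" for j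
    using that by force
  have "(1 + ?s) * absorbA x (pure 1) < payoffA x (pure 1)"
    by (rule lt) simp
  then have "1 + ?s < x 1 + x 2 + 2 * x 3"
    unfolding absorbA_pure payoffA_pure x(4) by simp
  then have c1: "?s < x 3"
    using x(4) by linarith
  have c2: "?s * x 1 < (1 - ?s) * x 2" and c3: "?s * x 3 < (1 - ?s) * x 1"
    using lt[of 2] lt[of 3] unfolding absorbA_pure payoffA_pure by (simp_all add: algebra_simps)
  have "(1 - ?s) ^ 2 = (1 - ?s + ?s ^ 2) * ?s"
    using sigmaA_cubic by algebra
  also have "\<dots> < (1 - ?s + ?s ^ 2) * x 3"
    using c1 s by (intro mult_strict_left_mono) (auto simp: power2_eq_square mult_left_le add_pos_nonneg)
  also have "\<dots> < (1 - ?s) * x 1 + (1 - ?s) ^ 2 * x 3"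
    using c3 by (simp add: power2_eq_square algebra_simps)
  also have "\<dots> < (1 - ?s) ^ 2 * (x 1 + x 2 + x 3)"
    using mult_strict_left_mono[OF c2, of "1 - ?s"] s by (simp add: power2_eq_square algebra_simps)
  finally show False
    using x by simp
qed

lemma disc_payoff_xA_tendsto:
  assumes "y \<in> mixed_actions {1,2,3}"
  shows "((\<lambda>l. disc_payoff {1,2,3} {1,2,3} gA abA l xA y) \<longlongrightarrow> 1 + sigmaA) (at_right 0)"
proof -
  let ?P = "absorbA xA y"
  have "0 < (1 - sigmaA) ^ 2"
    using sigmaA_bounds by simp
  then have P: "0 < ?P"
    using absorbA_xA_ge[OF assms] by linarith
  have "eventually (\<lambda>l. (1 + sigmaA) * ?P / (l + (1 - l) * ?P)
                         = disc_payoff {1,2,3} {1,2,3} gA abA l xA y) (at_right 0)"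
    using eventually_unit_interval_at_right_0
    by eventually_elim (subst disc_payoff_A[OF xA_mixed assms]; simp add: payoffA_xA)
  from tendsto_cong[OF this] tendsto_discounted_ratio[OF P, of "(1 + sigmaA) * ?P"]
  show ?thesis
    using P by simp
qed

lemma disc_payoff_A_nonneg:
  assumes "x \<in> mixed_actions {1,2,3}" "y \<in> mixed_actions {1,2,3}" "0 < l" "l < 1"
  shows "0 \<le> disc_payoff {1,2,3} {1,2,3} gA abA l x y"
  unfolding disc_payoff_A[OF assms]
  using payoffA_nonneg[OF assms(1,2)] absorbA_bounds[OF assms(1,2)] assms(3,4)
  by (simp add: add_pos_nonneg)

lemma disc_payoff_xA_ge:
  assumes y: "y \<in> mixed_actions {1,2,3}" and l: "0 < l" "l < 1"
  defines "a \<equiv> (1 - sigmaA) ^ 2"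
  shows "(1 + sigmaA) * (a / (l + (1 - l) * a)) \<le> disc_payoff {1,2,3} {1,2,3} gA abA l xA y"
proof -
  have "0 < a"
    using sigmaA_bounds by (simp add: a_def)
  then have "a / (l + (1 - l) * a) \<le> absorbA xA y / (l + (1 - l) * absorbA xA y)"
    using l absorbA_xA_ge[OF y] by (intro discounted_ratio_mono) (auto simp: a_def)
  then have "(1 + sigmaA) * (a / (l + (1 - l) * a))
               \<le> (1 + sigmaA) * (absorbA xA y / (l + (1 - l) * absorbA xA y))"
    using sigmaA_bounds by (intro mult_left_mono) auto
  then show ?thesis
    unfolding disc_payoff_A[OF xA_mixed y l] payoffA_xA by simp
qed

lemma exists_column_disc_payoff_le:
  assumes x: "x \<in> mixed_actions {1,2,3}" and l: "0 < l" "l < 1"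
  shows "\<exists>y\<in>mixed_actions {1,2,3}. disc_payoff {1,2,3} {1,2,3} gA abA l x y \<le> 1 + sigmaA"
proof -
  obtain j where j: "j \<in> {1,2,3}"
    and le: "payoffA x (pure j) \<le> (1 + sigmaA) * absorbA x (pure j)"
    using exists_column_ratio_le[OF x] by blast
  have y: "pure j \<in> mixed_actions {1,2,3}"
    using j by (simp add: pure_mixed_actions)
  let ?P = "absorbA x (pure j)"
  have "?P \<le> l + (1 - l) * ?P"
    using l absorbA_bounds[OF x y] by (simp add: algebra_simps mult_left_le)
  then have "(1 + sigmaA) * ?P \<le> (1 + sigmaA) * (l + (1 - l) * ?P)"
    using sigmaA_bounds by (intro mult_left_mono) auto
  moreover have "0 < l + (1 - l) * ?P"
    using l absorbA_bounds[OF x y] by (intro add_pos_nonneg) auto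
  ultimately have "disc_payoff {1,2,3} {1,2,3} gA abA l x (pure j) \<le> 1 + sigmaA"
    unfolding disc_payoff_A[OF x y l] using le by (simp add: divide_le_eq)
  with y show ?thesis
    by blast
qed

lemma disc_value_A_bounds:
  assumes l: "0 < l" "l < 1"
  defines "a \<equiv> (1 - sigmaA) ^ 2"
  shows "(1 + sigmaA) * (a / (l + (1 - l) * a)) \<le> disc_value {1,2,3} {1,2,3} gA abA l"
    and "disc_value {1,2,3} {1,2,3} gA abA l \<le> 1 + sigmaA"
proof -
  have "mixed_actions {1,2,3} \<noteq> {}"
    using xA_mixed by blast
  from sup_inf_bounds[where f = "\<lambda>x y. disc_payoff {1,2,3} {1,2,3} gA abA l x y",
      OF xA_mixed this disc_payoff_xA_ge[OF _ l] exists_column_disc_payoff_le[OF _ l]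
      disc_payoff_A_nonneg[OF _ _ l]]
  show "(1 + sigmaA) * (a / (l + (1 - l) * a)) \<le> disc_value {1,2,3} {1,2,3} gA abA l"
    and "disc_value {1,2,3} {1,2,3} gA abA l \<le> 1 + sigmaA"
    unfolding disc_value_def a_def by blast+
qed

lemma disc_value_A_tendsto:
  "((\<lambda>l. disc_value {1,2,3} {1,2,3} gA abA l) \<longlongrightarrow> 1 + sigmaA) (at_right 0)"
proof (rule tendsto_sandwich)
  define a where "a = (1 - sigmaA) ^ 2"
  have "0 < a"
    using sigmaA_bounds by (simp add: a_def)
  show "((\<lambda>l. (1 + sigmaA) * (a / (l + (1 - l) * a))) \<longlongrightarrow> 1 + sigmaA) (at_right 0)"
    using tendsto_mult_left[OF tendsto_discounted_ratio[OF \<open>0 < a\<close>, of a]] \<open>0 < a\<close> by simp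
  show "eventually (\<lambda>l. (1 + sigmaA) * (a / (l + (1 - l) * a))
                         \<le> disc_value {1,2,3} {1,2,3} gA abA l) (at_right 0)"
    using eventually_unit_interval_at_right_0
    by eventually_elim (use disc_value_A_bounds(1) a_def in blast)
  show "eventually (\<lambda>l. disc_value {1,2,3} {1,2,3} gA abA l \<le> 1 + sigmaA) (at_right 0)"
    using eventually_unit_interval_at_right_0
    by eventually_elim (use disc_value_A_bounds(2) in blast)
qed (rule tendsto_const)

theorem mainTheorem5:
  defines "x \<equiv> (\<lambda>i::nat. if i = 1 then alphaA
                      else if i = 2 then 1 - 2 * alphaA - alphaA ^ 2
                      else if i = 3 then alphaA + alphaA ^ 2 else 0)"
  shows "x \<in> mixed_actions {1,2,3}
    \<and> x 1 + x 2 + 2 * x 3 = (x 1 + 2 * x 2) / (x 1 + x 2)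
    \<and> (x 1 + 2 * x 2) / (x 1 + x 2) = (2 * x 1 + x 3) / (x 1 + x 3)
    \<and> (\<forall>y \<in> mixed_actions {1,2,3}.
          (y 1 + y 2 + 2 * y 3 = (y 1 + 2 * y 2) / (y 1 + y 2)
           \<and> (y 1 + 2 * y 2) / (y 1 + y 2) = (2 * y 1 + y 3) / (y 1 + y 3)) \<longrightarrow> y = x)
    \<and> (\<forall>j \<in> {1,2,3}. ((\<lambda>l. disc_payoff {1,2,3} {1,2,3} gA abA l x (pure j))
           \<longlongrightarrow> 1 + alphaA + alphaA ^ 2) (at_right 0))
    \<and> ((\<lambda>l. disc_value {1,2,3} {1,2,3} gA abA l) \<longlongrightarrow> 1 + alphaA + alphaA ^ 2) (at_right 0)"
proof -
  have x: "x = xA"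
    unfolding x_def xA_def alphaA_sigmaA(2) using alphaA_sigmaA(1) sigmaA_def by auto
  have v: "1 + alphaA + alphaA ^ 2 = 1 + sigmaA"
    by (simp add: sigmaA_def)
  have pure: "pure j \<in> mixed_actions {1,2,3}" if "j \<in> {1,2,3}" for j
    using that by (simp add: pure_mixed_actions)
  show ?thesis
    unfolding x v
    using xA_mixed equal_column_ratiosA_xA equal_column_ratiosA_unique
      disc_payoff_xA_tendsto[OF pure] disc_value_A_tendsto
    unfolding equal_column_ratiosA_def by blast
qed

end
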